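(* Let $t\in(1/2,1)$ and let $f(z)=z+\sum_{n=2}^{\infty}a_nz^n$ be a bi-univalent function in the open unit disk $\mathbb{U}$ such that, with $g$ denoting the univalent extension to $\mathbb{U}$ of $f^{-1}$, $$f'(z)\prec \frac{1}{1-2tz+z^2}\quad(z\in\mathbb{U}),\qquad g'(w)\prec\frac{1}{1-2tw+w^2}\quad(w\in\mathbb{U}).$$ Then $|a_3-a_2^2|\le \dfrac{4t}{3}$.
   Context: A function $f(z)=z+\sum_{n\ge2}a_nz^n$ analytic in $\mathbb{U}=\{|z|<1\}$ is bi-univalent if $f$ is univalent in $\mathbb{U}$ and its inverse $f^{-1}$ extends to a univalent function $g$ on $\mathbb{U}$. For analytic $F,G$ on $\mathbb{U}$, $F\prec G$ means there is an analytic $w$ on $\mathbb{U}$ with $w(0)=0$, $|w(z)|<1$ and $F=G\circ w$. The function $\frac{1}{1-2tz+z^2}$ is the generating function of the Chebyshev polynomials of the second kind, i.e. the Horadam generating function $\frac{a+(b-ap)tz}{1-ptz-qz^2}$ with $a=1$, $b=p=2$, $q=-1$ (so the class condition $f'(z)\prec\Omega(t,z)+1-a$ becomes the one above). *)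

theory Defs
  imports "HOL-Complex_Analysis.Complex_Analysis"
begin

definition subordinate :: "(complex \<Rightarrow> complex) \<Rightarrow> (complex \<Rightarrow> complex) \<Rightarrow> bool" where
  "subordinate F G \<longleftrightarrow>
     (\<exists>w. w holomorphic_on ball 0 1 \<and> w 0 = 0 \<and> (\<forall>z\<in>ball 0 1. norm (w z) < 1) \<and>
          (\<forall>z\<in>ball 0 1. F z = G (w z)))"

definition normalized_univalent :: "(complex \<Rightarrow> complex) \<Rightarrow> bool" where
  "normalized_univalent f \<longleftrightarrow>
     f holomorphic_on ball 0 1 \<and> inj_on f (ball 0 1) \<and> f 0 = 0 \<and> deriv f 0 = 1"

definition inverse_extension :: "(complex \<Rightarrow> complex) \<Rightarrow> (complex \<Rightarrow> complex) \<Rightarrow> bool" where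
  "inverse_extension f g \<longleftrightarrow>
     g holomorphic_on ball 0 1 \<and> inj_on g (ball 0 1) \<and>
     (\<forall>z\<in>ball 0 1. f z \<in> ball 0 1 \<longrightarrow> g (f z) = z)"

definition taylor_coeff :: "(complex \<Rightarrow> complex) \<Rightarrow> nat \<Rightarrow> complex" where
  "taylor_coeff f n = (deriv ^^ n) f 0 / of_nat (fact n)"

definition cheb_gen :: "real \<Rightarrow> complex \<Rightarrow> complex" where
  "cheb_gen t z = 1 / (1 - 2 * complex_of_real t * z + z^2)"

end

theory Submission
  imports Defs
begin

(* Write f' = Phi o u and g' = Phi o v with Schwarz functions u, v, where
   Phi z = 1 / (1 - 2 t z + z^2) = 1 + 2 t z + (4 t^2 - 1) z^2 + ...
   The chain rule expresses f''(0), f'''(0) and g''(0), g'''(0) through u'(0), u''(0) and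
   v'(0), v''(0), while differentiating g (f z) = z three times gives g''(0) = -f''(0) and
   g'''(0) = 3 f''(0)^2 - f'''(0).  Comparing the two descriptions yields v'(0) = -u'(0) and
   a_3 - a_2^2 = t (u''(0) - v''(0)) / 6, and Cauchy's estimate |u''(0)|, |v''(0)| <= 2 bounds
   this by 2t/3. *)

lemma deriv_cong_open:
  assumes "open S" "x \<in> S" "\<And>y. y \<in> S \<Longrightarrow> f y = g y"
  shows "deriv f x = deriv g x"
  using assms
  by (intro deriv_cong_ev refl) (auto elim: eventually_mono[OF eventually_nhds_in_open])

lemma deriv_comp_times:
  fixes h u v :: "complex \<Rightarrow> complex"
  assumes "h holomorphic_on A" "open A" "u holomorphic_on S" "v holomorphic_on S" "open S"
    "u ` S \<subseteq> A" "z \<in> S"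
  shows "deriv (\<lambda>x. h (u x) * v x) z = deriv h (u z) * deriv u z * v z + h (u z) * deriv v z"
proof -
  have "u z \<in> A" using assms by blast
  then have dh: "h field_differentiable at (u z)" and du: "u field_differentiable at z"
    and dv: "v field_differentiable at z"
    using assms holomorphic_on_imp_differentiable_at by blast+
  have "deriv (\<lambda>x. h (u x)) z = deriv h (u z) * deriv u z"
    using deriv_chain[OF du dh] by (simp add: o_def)
  moreover have "(\<lambda>x. h (u x)) field_differentiable at z"
    using field_differentiable_compose[OF du dh] by (simp add: o_def)
  ultimately show ?thesis using dv by simp
qed

lemma holomorphic_on_comp_times:
  fixes h u v :: "complex \<Rightarrow> complex"
  assumes "h holomorphic_on A" "u holomorphic_on S" "v holomorphic_on S" "u ` S \<subseteq> A"
  shows "(\<lambda>x. h (u x) * v x) holomorphic_on S"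
  using holomorphic_on_compose_gen[OF assms(2,1,4)] assms(3)
  by (auto intro: holomorphic_intros simp: o_def)

lemma higher_deriv_comp:
  fixes h u :: "complex \<Rightarrow> complex"
  assumes holh: "h holomorphic_on A" and "open A" and holu: "u holomorphic_on S" and "open S"
    and uS: "u ` S \<subseteq> A" and "z \<in> S"
  shows "deriv (\<lambda>x. h (u x)) z = deriv h (u z) * deriv u z"
    and "deriv (deriv (\<lambda>x. h (u x))) z =
           deriv (deriv h) (u z) * (deriv u z)^2 + deriv h (u z) * deriv (deriv u) z"
    and "deriv (deriv (deriv (\<lambda>x. h (u x)))) z =
           deriv (deriv (deriv h)) (u z) * (deriv u z)^3
           + 3 * deriv (deriv h) (u z) * deriv u z * deriv (deriv u) z
           + deriv h (u z) * deriv (deriv (deriv u)) z"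
proof -
  have hol_dh: "deriv h holomorphic_on A" "deriv (deriv h) holomorphic_on A"
    using holh \<open>open A\<close> by (auto intro!: holomorphic_deriv)
  have hol_du: "deriv u holomorphic_on S" "deriv (deriv u) holomorphic_on S"
    "(\<lambda>x. deriv u x * deriv u x) holomorphic_on S"
    using holu \<open>open S\<close> by (auto intro!: holomorphic_intros holomorphic_deriv)
  note chain_times = deriv_comp_times[OF _ \<open>open A\<close> holu _ \<open>open S\<close> uS]
  have d1: "deriv (\<lambda>x. h (u x)) x = deriv h (u x) * deriv u x" if "x \<in> S" for x
    using chain_times[of h "\<lambda>_. 1"] holh that by simp
  have d2: "deriv (deriv (\<lambda>x. h (u x))) x =
              deriv (deriv h) (u x) * (deriv u x)^2 + deriv h (u x) * deriv (deriv u) x"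
    if "x \<in> S" for x
    using deriv_cong_open[OF \<open>open S\<close> that d1] chain_times[of "deriv h" "deriv u" x]
      hol_dh hol_du that
    by (simp add: power2_eq_square)
  from d1 d2 \<open>z \<in> S\<close>
  show "deriv (\<lambda>x. h (u x)) z = deriv h (u z) * deriv u z"
    and "deriv (deriv (\<lambda>x. h (u x))) z =
           deriv (deriv h) (u z) * (deriv u z)^2 + deriv h (u z) * deriv (deriv u) z"
    by blast+
  have diff: "(\<lambda>x. h' (u x) * v x) field_differentiable at z"
    if "h' holomorphic_on A" "v holomorphic_on S" for h' v
    using holomorphic_on_comp_times[OF that(1) holu that(2) uS] \<open>open S\<close> \<open>z \<in> S\<close>
    by (rule holomorphic_on_imp_differentiable_at)
  have "deriv (deriv (deriv (\<lambda>x. h (u x)))) z =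
        deriv (\<lambda>x. deriv (deriv h) (u x) * (deriv u x * deriv u x)
                    + deriv h (u x) * deriv (deriv u) x) z"
    using deriv_cong_open[OF \<open>open S\<close> \<open>z \<in> S\<close> d2] by (simp add: power2_eq_square)
  also have "\<dots> = deriv (\<lambda>x. deriv (deriv h) (u x) * (deriv u x * deriv u x)) z
                  + deriv (\<lambda>x. deriv h (u x) * deriv (deriv u) x) z"
    using hol_dh hol_du by (intro deriv_add diff)
  also have "\<dots> = deriv (deriv (deriv h)) (u z) * deriv u z * (deriv u z * deriv u z)
                    + deriv (deriv h) (u z) * deriv (\<lambda>x. deriv u x * deriv u x) z
                  + (deriv (deriv h) (u z) * deriv u z * deriv (deriv u) z
                    + deriv h (u z) * deriv (deriv (deriv u)) z)"
    using chain_times[OF hol_dh(2) hol_du(3) \<open>z \<in> S\<close>]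
      chain_times[OF hol_dh(1) hol_du(2) \<open>z \<in> S\<close>]
    by simp
  also have "deriv (\<lambda>x. deriv u x * deriv u x) z = 2 * deriv u z * deriv (deriv u) z"
    using holomorphic_on_imp_differentiable_at[OF hol_du(1) \<open>open S\<close> \<open>z \<in> S\<close>] by simp
  finally show "deriv (deriv (deriv (\<lambda>x. h (u x)))) z =
           deriv (deriv (deriv h)) (u z) * (deriv u z)^3
           + 3 * deriv (deriv h) (u z) * deriv u z * deriv (deriv u) z
           + deriv h (u z) * deriv (deriv (deriv u)) z"
    by (simp add: algebra_simps power3_eq_cube)
qed

lemma derivs_left_inverse_at_0:
  fixes f g :: "complex \<Rightarrow> complex"
  assumes holf: "f holomorphic_on ball 0 1" and f0: "f 0 = 0" and df0: "deriv f 0 = 1"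
    and holg: "g holomorphic_on ball 0 1"
    and inv: "\<forall>z\<in>ball 0 1. f z \<in> ball 0 1 \<longrightarrow> g (f z) = z"
  shows "deriv g 0 = 1"
    and "deriv (deriv g) 0 = - deriv (deriv f) 0"
    and "deriv (deriv (deriv g)) 0 = 3 * (deriv (deriv f) 0)^2 - deriv (deriv (deriv f)) 0"
proof -
  define B where "B = ball 0 1 \<inter> f -` ball 0 1"
  have "open B"
    unfolding B_def using holomorphic_on_imp_continuous_on[OF holf]
    by (intro continuous_open_preimage) auto
  have "0 \<in> B" "f ` B \<subseteq> ball 0 1" "f holomorphic_on B"
    using f0 holf by (auto simp: B_def intro: holomorphic_on_subset)
  note comp = higher_deriv_comp[OF holg open_ball \<open>f holomorphic_on B\<close> \<open>open B\<close>
      \<open>f ` B \<subseteq> ball 0 1\<close> \<open>0 \<in> B\<close>]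
  have "eventually (\<lambda>z. g (f z) = z) (nhds 0)"
    using eventually_nhds_in_open[OF \<open>open B\<close> \<open>0 \<in> B\<close>]
    by eventually_elim (simp add: B_def inv)
  then have id: "(deriv ^^ n) (\<lambda>z. g (f z)) 0 = (deriv ^^ n) (\<lambda>z. z) 0" for n
    by (rule higher_deriv_cong_ev) simp
  from id[of 1] comp(1) show g1: "deriv g 0 = 1"
    by (simp add: f0 df0)
  from id[of 2] comp(2) show g2: "deriv (deriv g) 0 = - deriv (deriv f) 0"
    by (simp add: f0 df0 g1 numeral_2_eq_2 eq_neg_iff_add_eq_0)
  from id[of 3] comp(3)
  show "deriv (deriv (deriv g)) 0 = 3 * (deriv (deriv f) 0)^2 - deriv (deriv (deriv f)) 0"
    by (simp add: f0 df0 g1 g2 numeral_3_eq_3 power2_eq_square algebra_simps)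
qed

lemma norm_higher_deriv_0_le_fact:
  fixes u :: "complex \<Rightarrow> complex"
  assumes hol: "u holomorphic_on ball 0 1" and bounded: "\<forall>z\<in>ball 0 1. norm (u z) \<le> 1"
  shows "norm ((deriv ^^ n) u 0) \<le> fact n"
proof -
  have Cauchy: "norm ((deriv ^^ n) u 0) \<le> fact n / r^n" if r: "0 < r" "r < 1" for r
  proof -
    have sub: "cball 0 r \<subseteq> ball (0::complex) 1"
      using r by auto
    have "norm ((deriv ^^ n) u 0) \<le> fact n * 1 / r^n"
    proof (rule Cauchy_inequality)
      show "u holomorphic_on ball 0 r"
        using hol sub ball_subset_cball by (blast intro: holomorphic_on_subset)
      show "continuous_on (cball 0 r) u"
        using holomorphic_on_imp_continuous_on[OF hol] sub by (rule continuous_on_subset)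
      show "norm (u x) \<le> 1" if "norm (0 - x) = r" for x
      proof -
        have "x \<in> ball 0 1" using that r by simp
        then show ?thesis using bounded by blast
      qed
    qed (fact r)
    then show ?thesis by simp
  qed
  have "((\<lambda>r. fact n / r^n) \<longlongrightarrow> fact n / 1^n) (at_left (1::real))"
    by (intro tendsto_intros) auto
  moreover have "eventually (\<lambda>r. r \<in> {0<..<1}) (at_left (1::real))"
    by (rule eventually_at_left_real) simp
  then have "eventually (\<lambda>r. norm ((deriv ^^ n) u 0) \<le> fact n / r^n) (at_left (1::real))"
    by eventually_elim (simp add: Cauchy)
  ultimately show ?thesis
    by (intro tendsto_lowerbound) auto
qed

definition schwarz_function :: "(complex \<Rightarrow> complex) \<Rightarrow> bool" where
  "schwarz_function w \<longleftrightarrow>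
     w holomorphic_on ball 0 1 \<and> w 0 = 0 \<and> (\<forall>z\<in>ball 0 1. norm (w z) < 1)"

lemma subordinateE:
  assumes "subordinate F G"
  obtains w where "schwarz_function w" "\<forall>z\<in>ball 0 1. F z = G (w z)"
  using assms by (auto simp: subordinate_def schwarz_function_def)

lemma norm_deriv2_schwarz_function_le:
  assumes "schwarz_function w"
  shows "norm (deriv (deriv w) 0) \<le> 2"
  using norm_higher_deriv_0_le_fact[of w 2] assms
  by (auto simp: schwarz_function_def numeral_2_eq_2 less_imp_le)

lemma cheb_gen_denominator_nonzero:
  fixes t :: real and z :: complex
  assumes "\<bar>t\<bar> < 1" "norm z < 1"
  shows "1 - 2 * of_real t * z + z^2 \<noteq> 0"
proof
  \<comment> \<open>the roots \<open>t \<plusminus> i sqrt (1 - t^2)\<close> lie on the unit circle\<close>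
  assume h: "1 - 2 * of_real t * z + z^2 = 0"
  have re: "1 - 2 * t * Re z + (Re z)^2 - (Im z)^2 = 0"
    using arg_cong[OF h, of Re] by (simp add: power2_eq_square)
  have im: "Im z * (Re z - t) = 0"
    using arg_cong[OF h, of Im] by (simp add: power2_eq_square algebra_simps)
  have "(Re z)^2 + (Im z)^2 < 1"
    using assms(2) by (simp add: norm_complex_def)
  moreover have "t^2 < 1"
    using assms(1) by (simp add: abs_square_less_1)
  ultimately show False
  proof (cases "Im z = 0")
    case True
    then have "(Re z - t)^2 + (1 - t^2) = 0"
      using re by (simp add: power2_eq_square algebra_simps)
    then show False
      using \<open>t^2 < 1\<close> by (smt (verit) zero_le_power2)
  next
    case False
    then have "(Re z)^2 + (Im z)^2 = 1"
      using re im by (simp add: power2_eq_square algebra_simps)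
    then show False
      using \<open>(Re z)^2 + (Im z)^2 < 1\<close> by simp
  qed
qed

lemma
  fixes t :: real
  assumes t_range: "\<bar>t\<bar> < 1"
  shows holomorphic_cheb_gen: "cheb_gen t holomorphic_on ball 0 1"
    and deriv_cheb_gen_0: "deriv (cheb_gen t) 0 = 2 * of_real t"
    and deriv2_cheb_gen_0: "deriv (deriv (cheb_gen t)) 0 = 8 * (of_real t)^2 - 2"
proof -
  define p where "p w = 1 - 2 * of_real t * w + w^2" for w :: complex
  have p_nz: "p w \<noteq> 0" if "w \<in> ball 0 1" for w
    using cheb_gen_denominator_nonzero[OF t_range] that by (simp add: p_def)
  have cheb: "cheb_gen t = (\<lambda>w. 1 / p w)"
    by (simp add: cheb_gen_def p_def fun_eq_iff)
  show "cheb_gen t holomorphic_on ball 0 1"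
    unfolding cheb p_def using p_nz[unfolded p_def] by (intro holomorphic_intros) auto
  have dp: "(p has_field_derivative 2 * w - 2 * of_real t) (at w)" for w
    unfolding p_def by (rule derivative_eq_intros refl | simp)+
  have deriv_cheb: "deriv (cheb_gen t) w = (2 * of_real t - 2 * w) / p w ^ 2"
    if "w \<in> ball 0 1" for w
    using DERIV_inverse_fun[OF dp p_nz[OF that]] unfolding cheb
    by (intro DERIV_imp_deriv) (simp add: divide_inverse power2_eq_square algebra_simps)
  show "deriv (cheb_gen t) 0 = 2 * of_real t"
    using deriv_cheb[of 0] by (simp add: p_def)
  have "deriv (deriv (cheb_gen t)) 0 = deriv (\<lambda>w. (2 * of_real t - 2 * w) / p w ^ 2) 0"
    by (rule deriv_cong_open[of "ball 0 1"]) (auto simp: deriv_cheb)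
  also have "\<dots> = 8 * (of_real t)^2 - 2"
  proof (rule DERIV_imp_deriv)
    have "((\<lambda>w. 2 * of_real t - 2 * w) has_field_derivative -2) (at 0)"
      by (rule derivative_eq_intros refl | simp)+
    from DERIV_divide[OF this DERIV_power[OF dp, of 2]]
    show "((\<lambda>w. (2 * of_real t - 2 * w) / p w ^ 2)
            has_field_derivative 8 * (of_real t)^2 - 2) (at 0)"
      by (simp add: p_def power2_eq_square algebra_simps)
  qed
  finally show "deriv (deriv (cheb_gen t)) 0 = 8 * (of_real t)^2 - 2" .
qed

lemma derivs_comp_cheb_gen_at_0:
  fixes t :: real and F w :: "complex \<Rightarrow> complex"
  assumes t_range: "\<bar>t\<bar> < 1" and w: "schwarz_function w"
    and F: "\<forall>z\<in>ball 0 1. F z = cheb_gen t (w z)"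
  shows "deriv F 0 = 2 * of_real t * deriv w 0"
    and "deriv (deriv F) 0 =
           (8 * (of_real t)^2 - 2) * (deriv w 0)^2 + 2 * of_real t * deriv (deriv w) 0"
proof -
  have hol: "w holomorphic_on ball 0 1" and w0: "w 0 = 0" and wB: "w ` ball 0 1 \<subseteq> ball 0 1"
    using w by (auto simp: schwarz_function_def)
  note comp = higher_deriv_comp[OF holomorphic_cheb_gen[OF t_range] open_ball hol open_ball wB,
      of 0]
  have dF: "deriv F z = deriv (\<lambda>x. cheb_gen t (w x)) z" if "z \<in> ball 0 1" for z
    using F by (intro deriv_cong_open[OF open_ball that]) auto
  show "deriv F 0 = 2 * of_real t * deriv w 0"
    using dF[of 0] comp(1) by (simp add: w0 deriv_cheb_gen_0[OF t_range])
  have "deriv (deriv F) 0 = deriv (deriv (\<lambda>x. cheb_gen t (w x))) 0"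
    by (rule deriv_cong_open[of "ball 0 1"]) (simp_all add: dF)
  then show "deriv (deriv F) 0 =
          (8 * (of_real t)^2 - 2) * (deriv w 0)^2 + 2 * of_real t * deriv (deriv w) 0"
    using comp(2)
    by (simp add: w0 deriv_cheb_gen_0[OF t_range] deriv2_cheb_gen_0[OF t_range])
qed

lemma taylor_coeff_3_minus_square_eq:
  fixes t :: real and f g u v :: "complex \<Rightarrow> complex"
  assumes t_range: "\<bar>t\<bar> < 1" and t_nonzero: "t \<noteq> 0"
    and f: "normalized_univalent f" and g: "inverse_extension f g"
    and u: "schwarz_function u" "\<forall>z\<in>ball 0 1. deriv f z = cheb_gen t (u z)"
    and v: "schwarz_function v" "\<forall>z\<in>ball 0 1. deriv g z = cheb_gen t (v z)"
  shows "taylor_coeff f 3 - (taylor_coeff f 2)^2 =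
           of_real t * (deriv (deriv u) 0 - deriv (deriv v) 0) / 6"
proof -
  have "f holomorphic_on ball 0 1" "f 0 = 0" "deriv f 0 = 1"
    "g holomorphic_on ball 0 1" "\<forall>z\<in>ball 0 1. f z \<in> ball 0 1 \<longrightarrow> g (f z) = z"
    using f g by (auto simp: normalized_univalent_def inverse_extension_def)
  note inverse = derivs_left_inverse_at_0[OF this]
  note fu = derivs_comp_cheb_gen_at_0[OF t_range u]
  note gv = derivs_comp_cheb_gen_at_0[OF t_range v]
  have "2 * of_real t * (deriv v 0 + deriv u 0) = 0"
    using fu(1) gv(1) inverse(2) by algebra
  then have "deriv v 0 = - deriv u 0"
    using t_nonzero by (simp add: add_eq_0_iff)
  then have key: "2 * deriv (deriv (deriv f)) 0 - 3 * (deriv (deriv f) 0)^2 =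
                  2 * of_real t * (deriv (deriv u) 0 - deriv (deriv v) 0)"
    using fu(2) gv(2) inverse(3) by algebra
  have "taylor_coeff f 3 - (taylor_coeff f 2)^2 =
        deriv (deriv (deriv f)) 0 / 6 - (deriv (deriv f) 0 / 2)^2"
    by (simp add: taylor_coeff_def numeral_3_eq_3 numeral_2_eq_2)
  also have "\<dots> = (2 * deriv (deriv (deriv f)) 0 - 3 * (deriv (deriv f) 0)^2) / 12"
    by (simp add: field_simps power2_eq_square)
  finally show ?thesis
    unfolding key by simp
qed

theorem corollary2p4:
  fixes t :: real and f g :: "complex \<Rightarrow> complex"
  assumes "1/2 < t" and "t < 1"
    and "normalized_univalent f"
    and "inverse_extension f g"
    and "subordinate (deriv f) (cheb_gen t)"
    and "subordinate (deriv g) (cheb_gen t)"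
  shows "norm (taylor_coeff f 3 - (taylor_coeff f 2)^2) \<le> 4 * t / 3"
proof -
  obtain u where u: "schwarz_function u" "\<forall>z\<in>ball 0 1. deriv f z = cheb_gen t (u z)"
    using assms(5) by (rule subordinateE)
  obtain v where v: "schwarz_function v" "\<forall>z\<in>ball 0 1. deriv g z = cheb_gen t (v z)"
    using assms(6) by (rule subordinateE)
  have t_range: "\<bar>t\<bar> < 1" and t_nonzero: "t \<noteq> 0"
    using assms(1,2) by auto
  have "norm (deriv (deriv u) 0 - deriv (deriv v) 0) \<le> 4"
    using norm_triangle_ineq4 norm_deriv2_schwarz_function_le[OF u(1)]
      norm_deriv2_schwarz_function_le[OF v(1)] by (smt (verit))
  then have "norm (taylor_coeff f 3 - (taylor_coeff f 2)^2) \<le> t * 4 / 6"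
    unfolding taylor_coeff_3_minus_square_eq[OF t_range t_nonzero assms(3,4) u v]
    using assms(1) by (simp add: norm_mult norm_divide mult_left_mono divide_right_mono)
  also have "\<dots> \<le> 4 * t / 3"
    using assms(1) by simp
  finally show ?thesis .
qed

end
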